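(* Let $p$ be a prime, $q$ a power of $p$, $F$ a field of characteristic $p$ containing $\mathbb{F}_q$, and $L\in F[x]$ a $q$-polynomial of $q$-degree $n$ with no repeated roots in its splitting field $E$ over $F$; let $v_1,\dots,v_n$ be an ordered $\mathbb{F}_q$-basis of the space of roots of $L$. For $r\geq1$ let $\epsilon_r:H_{n,r}(\mathbb{F}_q)\to E$, $\epsilon_r(P)=P(v_1,\dots,v_n)$. If $\epsilon_r$ is not injective, then $\epsilon_t$ is not injective for all $t\geq r$.
   Context: $H_{n,r}(\mathbb{F}_q)$ is the space of homogeneous polynomials of degree $r$ in $\mathbb{F}_q[x_1,\dots,x_n]$ together with $0$. A $q$-polynomial of $q$-degree $n$ is $\sum_{i=0}^n a_ix^{q^i}$ with $a_n\neq0$. *)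

theory Defs
  imports "HOL-Computational_Algebra.Polynomial"
begin

definition is_subfield :: "'a::field set \<Rightarrow> bool" where
  "is_subfield K \<longleftrightarrow> 0 \<in> K \<and> 1 \<in> K \<and>
     (\<forall>x\<in>K. \<forall>y\<in>K. x + y \<in> K \<and> x * y \<in> K) \<and>
     (\<forall>x\<in>K. - x \<in> K \<and> inverse x \<in> K)"

definition Fq_in :: "'a::field set \<Rightarrow> nat \<Rightarrow> 'a set" where
  "Fq_in F q = {x \<in> F. x ^ q = x}"

definition is_q_polynomial :: "'a::field set \<Rightarrow> nat \<Rightarrow> nat \<Rightarrow> 'a poly \<Rightarrow> bool" where
  "is_q_polynomial F q n L \<longleftrightarrow> (\<exists>a. (\<forall>i\<le>n. a i \<in> F) \<and> a n \<noteq> 0 \<and>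
      L = (\<Sum>i\<le>n. monom (a i) (q ^ i)))"

definition is_splitting_field :: "'a::field set \<Rightarrow> 'a set \<Rightarrow> 'a poly \<Rightarrow> bool" where
  "is_splitting_field F E L \<longleftrightarrow> is_subfield F \<and> is_subfield E \<and> F \<subseteq> E \<and> L \<noteq> 0 \<and>
     (\<forall>i. coeff L i \<in> F) \<and>
     (\<exists>c rs. set rs \<subseteq> E \<and> L = smult c (\<Prod>r\<leftarrow>rs. [:- r, 1:])) \<and>
     E = \<Inter>{K. is_subfield K \<and> F \<union> {x. poly L x = 0} \<subseteq> K}"

definition monomials :: "nat \<Rightarrow> nat \<Rightarrow> (nat \<Rightarrow> nat) set" where
  "monomials n r = {\<alpha>. (\<forall>i\<ge>n. \<alpha> i = 0) \<and> (\<Sum>i<n. \<alpha> i) = r}"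

text \<open>H_{n,r}(K): homogeneous polynomials of degree r (together with 0) with coefficients
  in K, represented by their coefficient functions on exponent vectors.\<close>
definition hom_polys :: "'a::field set \<Rightarrow> nat \<Rightarrow> nat \<Rightarrow> ((nat \<Rightarrow> nat) \<Rightarrow> 'a) set" where
  "hom_polys K n r = {c. (\<forall>\<alpha>. c \<alpha> \<in> K) \<and> (\<forall>\<alpha>. \<alpha> \<notin> monomials n r \<longrightarrow> c \<alpha> = 0)}"

definition eval_hom :: "nat \<Rightarrow> nat \<Rightarrow> (nat \<Rightarrow> 'a::field) \<Rightarrow> ((nat \<Rightarrow> nat) \<Rightarrow> 'a) \<Rightarrow> 'a" where
  "eval_hom n r v c = (\<Sum>\<alpha>\<in>monomials n r. c \<alpha> * (\<Prod>i<n. v i ^ \<alpha> i))"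

end

theory Submission
  imports Defs "HOL-Library.FuncSet"
begin

text \<open>Multiplying by \<open>x\<^sub>0\<^sup>d\<close> maps \<open>H\<^sub>n\<^sub>,\<^sub>r\<close> injectively into \<open>H\<^sub>n\<^sub>,\<^sub>r\<^sub>+\<^sub>d\<close> and multiplies
  every value \<open>P(v)\<close> by \<open>v\<^sub>0\<^sup>d\<close>. Hence two distinct polynomials of degree \<open>r\<close> with the
  same value give two distinct polynomials of degree \<open>t \<ge> r\<close> with the same value.
  The argument only uses \<open>0 \<in> \<bbbF>\<^sub>q\<close>.\<close>

lemma finite_monomials: "finite (monomials n r)"
proof -
  let ?ext = "\<lambda>f i. if i < n then f i else 0"
  have "monomials n r \<subseteq> ?ext ` ({..<n} \<rightarrow>\<^sub>E {..r})"
  proof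
    fix \<alpha> assume \<alpha>: "\<alpha> \<in> monomials n r"
    have "\<alpha> i \<le> r" if "i < n" for i
    proof -
      have "\<alpha> i \<le> (\<Sum>j<n. \<alpha> j)" using that by (intro member_le_sum) auto
      thus ?thesis using \<alpha> by (simp add: monomials_def)
    qed
    then have "restrict \<alpha> {..<n} \<in> {..<n} \<rightarrow>\<^sub>E {..r}" by auto
    moreover have "\<alpha> = ?ext (restrict \<alpha> {..<n})"
      using \<alpha> by (auto simp: monomials_def fun_eq_iff)
    ultimately show "\<alpha> \<in> ?ext ` ({..<n} \<rightarrow>\<^sub>E {..r})" by blast
  qed
  then show ?thesis by (rule finite_subset) (auto intro: finite_PiE)
qed

lemma monomials_0: "monomials 0 r = (if r = 0 then {\<lambda>_. 0} else {})"
  by (auto simp: monomials_def)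

lemma inj_on_eval_hom_0: "inj_on (eval_hom 0 r v) (hom_polys K 0 r)"
proof (rule inj_onI)
  fix c1 c2 assume c: "c1 \<in> hom_polys K 0 r" "c2 \<in> hom_polys K 0 r"
    and eq: "eval_hom 0 r v c1 = eval_hom 0 r v c2"
  show "c1 = c2"
  proof
    fix \<alpha>
    show "c1 \<alpha> = c2 \<alpha>"
    proof (cases "\<alpha> \<in> monomials 0 r")
      case True
      then have "monomials 0 r = {\<alpha>}" by (simp add: monomials_0 split: if_splits)
      then show ?thesis using eq by (simp add: eval_hom_def)
    qed (use c in \<open>simp add: hom_polys_def\<close>)
  qed
qed

lemma sum_fun_upd_0_add:
  assumes "(n::nat) > 0"
  shows "(\<Sum>i<n. (\<beta>(0 := \<beta> 0 + d)) i) = (\<Sum>i<n. \<beta> i) + (d::nat)"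
proof -
  obtain m where n: "n = Suc m" using assms by (cases n) auto
  show ?thesis unfolding n sum.lessThan_Suc_shift by simp
qed

lemma prod_power_fun_upd_0_add:
  assumes "(n::nat) > 0"
  shows "(\<Prod>i<n. v i ^ (\<beta>(0 := \<beta> 0 + d)) i) = v 0 ^ d * (\<Prod>i<n. v i ^ \<beta> i)"
proof -
  obtain m where n: "n = Suc m" using assms by (cases n) auto
  show ?thesis unfolding n prod.lessThan_Suc_shift by (simp add: power_add mult_ac)
qed

lemma bij_betw_monomials_add_exp_0:
  assumes "n > 0"
  shows "bij_betw (\<lambda>\<beta>. \<beta>(0 := \<beta> 0 + d)) (monomials n r)
           {\<alpha> \<in> monomials n (r + d). d \<le> \<alpha> 0}"
proof (rule bij_betwI[where g = "\<lambda>\<alpha>. \<alpha>(0 := \<alpha> 0 - d)"])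
  show "(\<lambda>\<beta>. \<beta>(0 := \<beta> 0 + d)) \<in> monomials n r \<rightarrow> {\<alpha> \<in> monomials n (r + d). d \<le> \<alpha> 0}"
  proof
    fix \<beta> assume "\<beta> \<in> monomials n r"
    then show "\<beta>(0 := \<beta> 0 + d) \<in> {\<alpha> \<in> monomials n (r + d). d \<le> \<alpha> 0}"
      using assms sum_fun_upd_0_add[OF assms, of \<beta> d] by (auto simp: monomials_def)
  qed
  show "(\<lambda>\<alpha>. \<alpha>(0 := \<alpha> 0 - d)) \<in> {\<alpha> \<in> monomials n (r + d). d \<le> \<alpha> 0} \<rightarrow> monomials n r"
  proof
    fix \<alpha> assume \<alpha>: "\<alpha> \<in> {\<alpha> \<in> monomials n (r + d). d \<le> \<alpha> 0}"
    let ?\<beta> = "\<alpha>(0 := \<alpha> 0 - d)"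
    have "\<alpha> = ?\<beta>(0 := ?\<beta> 0 + d)" using \<alpha> by auto
    then have "(\<Sum>i<n. \<alpha> i) = (\<Sum>i<n. ?\<beta> i) + d"
      using sum_fun_upd_0_add[OF assms, of ?\<beta> d] by metis
    then show "?\<beta> \<in> monomials n r" using \<alpha> assms by (auto simp: monomials_def)
  qed
qed auto

definition mult_x0_pow :: "nat \<Rightarrow> ((nat \<Rightarrow> nat) \<Rightarrow> 'a::zero) \<Rightarrow> (nat \<Rightarrow> nat) \<Rightarrow> 'a" where
  "mult_x0_pow d c \<alpha> = (if d \<le> \<alpha> 0 then c (\<alpha>(0 := \<alpha> 0 - d)) else 0)"

lemma inj_mult_x0_pow: "inj (mult_x0_pow d)"
proof (rule injI)
  fix c1 c2 :: "(nat \<Rightarrow> nat) \<Rightarrow> 'a"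
  assume eq: "mult_x0_pow d c1 = mult_x0_pow d c2"
  show "c1 = c2"
  proof
    fix \<beta>
    have "mult_x0_pow d c1 (\<beta>(0 := \<beta> 0 + d)) = mult_x0_pow d c2 (\<beta>(0 := \<beta> 0 + d))"
      using eq by simp
    then show "c1 \<beta> = c2 \<beta>" by (simp add: mult_x0_pow_def)
  qed
qed

lemma mult_x0_pow_hom_polys:
  assumes "n > 0" "0 \<in> K" "c \<in> hom_polys K n r"
  shows "mult_x0_pow d c \<in> hom_polys K n (r + d)"
  unfolding hom_polys_def
proof (intro CollectI conjI allI impI)
  fix \<alpha> show "mult_x0_pow d c \<alpha> \<in> K"
    using assms by (auto simp: mult_x0_pow_def hom_polys_def)
next
  fix \<alpha> assume \<alpha>: "\<alpha> \<notin> monomials n (r + d)"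
  show "mult_x0_pow d c \<alpha> = 0"
  proof (cases "d \<le> \<alpha> 0")
    case True
    have "\<alpha> \<notin> (\<lambda>\<beta>. \<beta>(0 := \<beta> 0 + d)) ` monomials n r"
      using \<alpha> bij_betw_imp_surj_on[OF bij_betw_monomials_add_exp_0[OF assms(1)]] by blast
    moreover have "\<alpha> = (\<alpha>(0 := \<alpha> 0 - d))(0 := (\<alpha>(0 := \<alpha> 0 - d)) 0 + d)"
      using True by auto
    ultimately have "\<alpha>(0 := \<alpha> 0 - d) \<notin> monomials n r" by blast
    then show ?thesis using True assms(3) by (simp add: mult_x0_pow_def hom_polys_def)
  qed (simp add: mult_x0_pow_def)
qed

lemma eval_hom_mult_x0_pow:
  assumes "n > 0"
  shows "eval_hom n (r + d) v (mult_x0_pow d c) = v 0 ^ d * eval_hom n r v c"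
proof -
  let ?S = "{\<alpha> \<in> monomials n (r + d). d \<le> \<alpha> 0}"
  have "eval_hom n (r + d) v (mult_x0_pow d c)
          = (\<Sum>\<alpha>\<in>?S. mult_x0_pow d c \<alpha> * (\<Prod>i<n. v i ^ \<alpha> i))"
    unfolding eval_hom_def
    by (simp add: sum.inter_filter finite_monomials) (rule sum.cong, auto simp: mult_x0_pow_def)
  also have "\<dots> = (\<Sum>\<beta>\<in>monomials n r.
      mult_x0_pow d c (\<beta>(0 := \<beta> 0 + d)) * (\<Prod>i<n. v i ^ (\<beta>(0 := \<beta> 0 + d)) i))"
    by (rule sum.reindex_bij_betw[OF bij_betw_monomials_add_exp_0[OF assms], symmetric])
  also have "\<dots> = v 0 ^ d * eval_hom n r v c"
    by (simp only: prod_power_fun_upd_0_add[OF assms])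
      (simp add: mult_x0_pow_def eval_hom_def sum_distrib_left mult_ac)
  finally show ?thesis .
qed

lemma not_inj_on_eval_hom_mono:
  assumes "0 \<in> K" "\<not> inj_on (eval_hom n r v) (hom_polys K n r)" "r \<le> t"
  shows "\<not> inj_on (eval_hom n t v) (hom_polys K n t)"
proof
  assume inj: "inj_on (eval_hom n t v) (hom_polys K n t)"
  have n: "n > 0"
  proof (rule ccontr)
    assume "\<not> n > 0"
    then have "n = 0" by simp
    then show False using assms(2) inj_on_eval_hom_0 by blast
  qed
  obtain c1 c2 where c: "c1 \<in> hom_polys K n r" "c2 \<in> hom_polys K n r"
    "c1 \<noteq> c2" "eval_hom n r v c1 = eval_hom n r v c2"
    using assms(2) unfolding inj_on_def by blast
  define d where "d = t - r"
  have t: "t = r + d" using assms(3) d_def by simp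
  have "eval_hom n t v (mult_x0_pow d c1) = eval_hom n t v (mult_x0_pow d c2)"
    using c(4) by (simp add: t eval_hom_mult_x0_pow[OF n])
  then have "mult_x0_pow d c1 = mult_x0_pow d c2"
    using mult_x0_pow_hom_polys[OF n assms(1) c(1), of d, folded t]
      mult_x0_pow_hom_polys[OF n assms(1) c(2), of d, folded t]
    by (rule inj_onD[OF inj])
  then show False using inj_mult_x0_pow c(3) by (metis injD)
qed

theorem lemma7p1:
  fixes p q k n r t :: nat and F E :: "'a::field set" and L :: "'a poly" and v :: "nat \<Rightarrow> 'a"
  assumes "prime p" and "k \<ge> 1" and "q = p ^ k"
    and "of_nat p = (0::'a)"
    and "is_subfield F"
    and "card (Fq_in F q) = q"
    and "is_q_polynomial F q n L"
    and "is_splitting_field F E L"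
    and "\<forall>x\<in>E. poly L x = 0 \<longrightarrow> order x L = 1"
    and "\<forall>i<n. v i \<in> E \<and> poly L (v i) = 0"
    and "\<forall>c. (\<forall>i<n. c i \<in> Fq_in F q) \<and> (\<Sum>i<n. c i * v i) = 0 \<longrightarrow> (\<forall>i<n. c i = 0)"
    and "\<forall>x\<in>E. poly L x = 0 \<longrightarrow> (\<exists>c. (\<forall>i<n. c i \<in> Fq_in F q) \<and> x = (\<Sum>i<n. c i * v i))"
    and "r \<ge> 1"
    and "\<not> inj_on (eval_hom n r v) (hom_polys (Fq_in F q) n r)"
    and "t \<ge> r"
  shows "\<not> inj_on (eval_hom n t v) (hom_polys (Fq_in F q) n t)"
proof (rule not_inj_on_eval_hom_mono[OF _ assms(14,15)])
  have "q > 0" using assms(1,3) by (simp add: prime_gt_0_nat)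
  then show "0 \<in> Fq_in F q" using assms(5) by (simp add: Fq_in_def is_subfield_def)
qed

end
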